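(* Let $n$ be a positive integer, $\pi\in\mathrm{NC}_B(n)$ and $\psi(\pi)=(\sigma,x)$. Write $i\sim_\pi j$ if $i,j$ lie in the same block of $\pi$. Then: (1) $x=\emptyset$ if and only if there is no $i\in[\pm n]$ with $i\sim_\pi -i$ and there are no positive integers $i,j$ with $i\sim_\pi -j$; (2) $x$ is an edge if and only if there is no $i$ with $i\sim_\pi -i$ and there are positive integers $i,j$ with $i\sim_\pi -j$; in this case there is a unique pair $(a,b)$ of positive integers with $a<b$ such that $b-a$ is minimal subject to $a\sim_\pi -b$, this $(a,b)$ is an edge of $\sigma$, and $x=(a,b)$; (3) $x$ is a block if and only if there is an $i$ with $i\sim_\pi -i$; in this case $x$ is the block consisting of the positive integers $i$ with $i\sim_\pi -i$.
   Context: $[\pm n]=\{1,\dots,n,-1,\dots,-n\}$. A partition of type $B_n$ is a partition $\pi$ of $[\pm n]$ such that $-B$ is a block whenever $B$ is, with at most one block satisfying $B=-B$; it is noncrossing if, in the linear order $1<\cdots<n<-1<\cdots<-n$, there are no $a<b<c<d$ with $a,c$ in one block and $b,d$ in another. $\mathrm{NC}_B(n)$ is the set of these; $\mathrm{NC}(n)$ is the set of noncrossing partitions of $[n]$. An edge of $\sigma\in\mathrm{NC}(n)$ is a pair $(i,j)$, $i<j$, with $i,j$ in a common block containing no integer strictly between them. The map $\psi$: given $\pi\in\mathrm{NC}_B(n)$, let $\eta$ be obtained by deleting all negative integers from the blocks of $\pi$ (discarding empty sets), and let $X$ be the set of blocks $A$ of $\eta$ such that the block of $\pi$ containing $A$ also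 contains a negative integer. Write $X=\{A_1,\dots,A_m\}$ with $\max A_1<\cdots<\max A_m$. Let $\sigma$ be obtained from $\eta$ by merging $A_i$ and $A_{m+1-i}$ for $i=1,\dots,\lfloor m/2\rfloor$; $x=\emptyset$ if $m=0$, $x=(\max A_{m/2},\min A_{m/2+1})$ if $m>0$ is even, $x=A_{(m+1)/2}$ if $m$ is odd; $\psi(\pi)=(\sigma,x)$. *)

theory Defs
  imports Main
begin

definition pmset :: "nat \<Rightarrow> int set" where
  "pmset n = {i. i \<noteq> 0 \<and> - int n \<le> i \<and> i \<le> int n}"

definition is_partition :: "'a set \<Rightarrow> 'a set set \<Rightarrow> bool" where
  "is_partition S P \<longleftrightarrow> (\<forall>B\<in>P. B \<noteq> {} \<and> B \<subseteq> S) \<and> \<Union>P = S \<and>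
     (\<forall>B\<in>P. \<forall>C\<in>P. B \<noteq> C \<longrightarrow> B \<inter> C = {})"

definition noncrossing_wrt :: "('a \<Rightarrow> int) \<Rightarrow> 'a set set \<Rightarrow> bool" where
  "noncrossing_wrt r P \<longleftrightarrow> (\<forall>B\<in>P. \<forall>C\<in>P. B \<noteq> C \<longrightarrow>
     \<not> (\<exists>a b c d. a \<in> B \<and> c \<in> B \<and> b \<in> C \<and> d \<in> C \<and> r a < r b \<and> r b < r c \<and> r c < r d))"

text \<open>Position in the order 1 < ... < n < -1 < ... < -n.\<close>
definition posB :: "nat \<Rightarrow> int \<Rightarrow> int" where
  "posB n i = (if i > 0 then i else int n - i)"

definition NC_B :: "nat \<Rightarrow> int set set set" where
  "NC_B n = {\<pi>. is_partition (pmset n) \<pi> \<and> (\<forall>B\<in>\<pi>. uminus ` B \<in> \<pi>) \<and>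
      card {B\<in>\<pi>. uminus ` B = B} \<le> 1 \<and> noncrossing_wrt (posB n) \<pi>}"

definition NC :: "nat \<Rightarrow> int set set set" where
  "NC n = {\<sigma>. is_partition {1..int n} \<sigma> \<and> noncrossing_wrt id \<sigma>}"

definition is_edge :: "int set set \<Rightarrow> int \<Rightarrow> int \<Rightarrow> bool" where
  "is_edge \<sigma> i j \<longleftrightarrow> i < j \<and> (\<exists>B\<in>\<sigma>. i \<in> B \<and> j \<in> B \<and> (\<forall>k\<in>B. \<not> (i < k \<and> k < j)))"

datatype xval = XEmpty | XEdge int int | XBlock "int set"

definition sameblock :: "int set set \<Rightarrow> int \<Rightarrow> int \<Rightarrow> bool" where
  "sameblock \<pi> i j \<longleftrightarrow> (\<exists>B\<in>\<pi>. i \<in> B \<and> j \<in> B)"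

definition eta_of :: "int set set \<Rightarrow> int set set" where
  "eta_of \<pi> = {B \<inter> {0<..} | B. B \<in> \<pi> \<and> B \<inter> {0<..} \<noteq> {}}"

definition X_of :: "int set set \<Rightarrow> int set set" where
  "X_of \<pi> = {A \<in> eta_of \<pi>. \<exists>B\<in>\<pi>. A \<subseteq> B \<and> B \<inter> {..<0} \<noteq> {}}"

text \<open>The k-th element (1-indexed) of X ordered by increasing maxima.\<close>
definition Xenum :: "int set set \<Rightarrow> nat \<Rightarrow> int set" where
  "Xenum \<pi> k = (THE A. A \<in> X_of \<pi> \<and> card {A' \<in> X_of \<pi>. Max A' < Max A} = k - 1)"

definition psi :: "int set set \<Rightarrow> int set set \<times> xval" where
  "psi \<pi> = (let X = X_of \<pi>; m = card X; A = Xenum \<pi>;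
      \<sigma> = (eta_of \<pi> - X) \<union> {A i \<union> A (m + 1 - i) | i. 1 \<le> i \<and> i \<le> m div 2}
          \<union> (if odd m then {A ((m + 1) div 2)} else {});
      x = (if m = 0 then XEmpty
           else if even m then XEdge (Max (A (m div 2))) (Min (A (m div 2 + 1)))
           else XBlock (A ((m + 1) div 2)))
    in (\<sigma>, x))"

end

theory Submission imports Defs begin

text \<open>
  Call a block of \<pi> crossing if it contains both positive and negative integers; the sets in X are
  exactly the positive parts of the crossing blocks. Since \<pi> is noncrossing in the order
  1 < \<dots> < n < -1 < \<dots> < -n, the positive parts of two crossing blocks B, B' lie entirely on one
  side of each other, and the positive parts of -B, -B' then lie in the opposite order. Hence
  B \<mapsto> -B induces an order-reversing involution of X, which maps the k-th element of X to the
  (m+1-k)-th. Its fixed points are the positive parts of blocks with B = -B, of which there is at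
  most one: there is a zero block iff m is odd, and then the middle element of X is its positive part.
  For even m the two middle elements are the positive parts of B and -B for one crossing block B,
  and every pair a \<sim> -b with a < b is nested around the pair (max A_{m/2}, min A_{m/2+1}), which is
  therefore the unique closest one.
\<close>

definition rank :: "('a \<Rightarrow> 'b::linorder) \<Rightarrow> 'a set \<Rightarrow> 'a \<Rightarrow> nat" where
  "rank f X A = card {A' \<in> X. f A' < f A}"

lemma rank_less_iff:
  assumes "finite X" "inj_on f X" "A \<in> X" "A' \<in> X"
  shows "rank f X A < rank f X A' \<longleftrightarrow> f A < f A'"
proof -
  have strict_mono: "rank f X B < rank f X B'" if "B \<in> X" "B' \<in> X" "f B < f B'" for B B'
    unfolding rank_def by (rule psubset_card_mono) (use assms(1) that in auto)
  show ?thesis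
  proof
    assume less: "rank f X A < rank f X A'"
    show "f A < f A'"
    proof (rule ccontr)
      assume "\<not> f A < f A'"
      then have "f A' < f A \<or> A = A'" using inj_onD[OF assms(2) _ assms(3,4)] by (metis linorder_neqE)
      then show False using strict_mono[of A' A] less assms(3,4) by auto
    qed
  qed (use strict_mono assms in blast)
qed

lemma bij_betw_rank:
  assumes "finite X" "inj_on f X"
  shows "bij_betw (rank f X) X {..<card X}"
proof -
  have inj: "inj_on (rank f X) X"
    by (rule inj_onI) (metis assms rank_less_iff inj_onD linorder_neq_iff less_irrefl)
  have "rank f X A < card X" if "A \<in> X" for A
  proof -
    have "rank f X A \<le> card (X - {A})"
      unfolding rank_def using assms(1) by (intro card_mono) auto
    also have "\<dots> < card X" using assms(1) that by (meson card_Diff1_less)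
    finally show ?thesis .
  qed
  then have "rank f X ` X \<subseteq> {..<card X}" by auto
  moreover have "card (rank f X ` X) = card {..<card X}" using inj by (simp add: card_image)
  ultimately have "rank f X ` X = {..<card X}" by (intro card_subset_eq) auto
  then show ?thesis using inj unfolding bij_betw_def by blast
qed

lemma rank_antitone_involution:
  assumes fin: "finite X" and inj: "inj_on f X"
    and maps: "\<And>A. A \<in> X \<Longrightarrow> g A \<in> X" and invol: "\<And>A. A \<in> X \<Longrightarrow> g (g A) = A"
    and antitone: "\<And>A A'. A \<in> X \<Longrightarrow> A' \<in> X \<Longrightarrow> f A < f A' \<Longrightarrow> f (g A') < f (g A)"
    and A: "A \<in> X"
  shows "rank f X (g A) = card X - 1 - rank f X A"
proof -
  define above where "above = {A' \<in> X. f A < f A'}"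
  have "{A' \<in> X. f A' < f (g A)} = g ` above"
  proof (intro equalityI subsetI)
    fix A' assume A': "A' \<in> {A' \<in> X. f A' < f (g A)}"
    then have "f A < f (g A')" using antitone[of A' "g A"] maps invol A by auto
    then show "A' \<in> g ` above" using A' maps invol unfolding above_def by (metis (mono_tags) image_eqI mem_Collect_eq)
  qed (use antitone A maps in \<open>auto simp: above_def\<close>)
  moreover have "inj_on g above" unfolding above_def by (metis (mono_tags) inj_onI invol mem_Collect_eq)
  ultimately have "rank f X (g A) = card above" unfolding rank_def by (simp add: card_image)
  also have "above = X - insert A {A' \<in> X. f A' < f A}"
    using inj_onD[OF inj _ _ A] by (auto simp: above_def) (metis linorder_neqE)
  also have "card \<dots> = card X - card (insert A {A' \<in> X. f A' < f A})"
    using fin A by (intro card_Diff_subset) auto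
  also have "card (insert A {A' \<in> X. f A' < f A}) = rank f X A + 1"
    unfolding rank_def using fin by (subst card_insert_disjoint) auto
  finally show ?thesis by simp
qed

definition pos_part :: "int set \<Rightarrow> int set" where
  "pos_part B = B \<inter> {0<..}"

lemma pos_part_iff [simp]: "a \<in> pos_part B \<longleftrightarrow> a \<in> B \<and> 0 < a"
  by (simp add: pos_part_def)

lemma neg_image_iff [simp]: "(a::'a::group_add) \<in> uminus ` B \<longleftrightarrow> - a \<in> B"
  by (metis image_iff minus_minus)

definition below :: "int set \<Rightarrow> int set \<Rightarrow> bool" where
  "below A A' \<longleftrightarrow> (\<forall>a\<in>A. \<forall>a'\<in>A'. a < a')"

lemma is_edge_Max_Min:
  assumes "finite A" "finite A'" "A \<noteq> {}" "A' \<noteq> {}" "below A A'" "A \<union> A' \<in> \<sigma>"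
  shows "is_edge \<sigma> (Max A) (Min A')"
proof -
  have "Max A < Min A'" using assms Max_in Min_in unfolding below_def by blast
  moreover have "\<not> (Max A < k \<and> k < Min A')" if "k \<in> A \<union> A'" for k
    using that Max_ge[OF assms(1)] Min_le[OF assms(2)] by force
  moreover have "Max A \<in> A \<union> A'" "Min A' \<in> A \<union> A'" using assms by simp_all
  ultimately show ?thesis
    unfolding is_edge_def using assms(6) by (intro conjI bexI[of _ "A \<union> A'"] ballI) auto
qed

lemma psi_merged_block:
  assumes "psi \<pi> = (\<sigma>, x)" "1 \<le> i" "i \<le> card (X_of \<pi>) div 2"
  shows "Xenum \<pi> i \<union> Xenum \<pi> (card (X_of \<pi>) + 1 - i) \<in> \<sigma>"
proof -
  have "\<sigma> = (eta_of \<pi> - X_of \<pi>)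
      \<union> {Xenum \<pi> i \<union> Xenum \<pi> (card (X_of \<pi>) + 1 - i) | i. 1 \<le> i \<and> i \<le> card (X_of \<pi>) div 2}
      \<union> (if odd (card (X_of \<pi>)) then {Xenum \<pi> ((card (X_of \<pi>) + 1) div 2)} else {})"
    using assms(1) by (simp add: psi_def Let_def)
  then show ?thesis using assms(2,3) by blast
qed

locale nc_B_partition =
  fixes n :: nat and \<pi> :: "int set set"
  assumes in_NC_B: "\<pi> \<in> NC_B n"
begin

lemma block_subset: "B \<in> \<pi> \<Longrightarrow> B \<subseteq> pmset n"
  using in_NC_B unfolding NC_B_def is_partition_def by blast

lemma block_unique: "B \<in> \<pi> \<Longrightarrow> B' \<in> \<pi> \<Longrightarrow> i \<in> B \<Longrightarrow> i \<in> B' \<Longrightarrow> B = B'"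
  using in_NC_B unfolding NC_B_def is_partition_def by blast

lemma neg_block: "B \<in> \<pi> \<Longrightarrow> uminus ` B \<in> \<pi>"
  using in_NC_B unfolding NC_B_def by blast

lemma noncrossing: "noncrossing_wrt (posB n) \<pi>"
  using in_NC_B unfolding NC_B_def by blast

lemma finite_blocks: "finite \<pi>"
proof -
  have "finite (pmset n)" by (rule finite_subset[of _ "{- int n..int n}"]) (auto simp: pmset_def)
  moreover have "\<pi> \<subseteq> Pow (pmset n)" using block_subset by blast
  ultimately show ?thesis by (meson finite_Pow_iff finite_subset)
qed

lemma finite_block: "B \<in> \<pi> \<Longrightarrow> finite B"
  using block_subset by (rule finite_subset) (auto simp: pmset_def)

lemma block_le: "B \<in> \<pi> \<Longrightarrow> i \<in> B \<Longrightarrow> i \<le> int n"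
  using block_subset by (auto simp: pmset_def)

lemma sameblock_iff: "B \<in> \<pi> \<Longrightarrow> i \<in> B \<Longrightarrow> sameblock \<pi> i j \<longleftrightarrow> j \<in> B"
  unfolding sameblock_def using block_unique by blast

lemma symmetric_block: "B \<in> \<pi> \<Longrightarrow> i \<in> B \<Longrightarrow> - i \<in> B \<Longrightarrow> uminus ` B = B"
  using block_unique[of "uminus ` B" B "- i"] neg_block by auto

lemma symmetric_block_unique:
  assumes "B \<in> \<pi>" "B' \<in> \<pi>" "uminus ` B = B" "uminus ` B' = B'"
  shows "B = B'"
proof -
  define S where "S = {B \<in> \<pi>. uminus ` B = B}"
  have "card S \<le> Suc 0" using in_NC_B unfolding NC_B_def S_def by simp
  moreover have "finite S" using finite_blocks unfolding S_def by simp
  ultimately have "\<forall>C\<in>S. \<forall>D\<in>S. C = D" using card_le_Suc0_iff_eq by blast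
  then show ?thesis using assms unfolding S_def by blast
qed

text \<open>If c < d, then a < a' < -c < -d in the order 1 < \<dots> < n < -1 < \<dots> < -n, a crossing.\<close>
lemma nested_crossings:
  assumes B: "B \<in> \<pi>" "B' \<in> \<pi>" "B \<noteq> B'" "a \<in> B" "- c \<in> B" "a' \<in> B'" "- d \<in> B'"
    and pos: "0 < a" "a < a'" "0 < c" "0 < d"
  shows "d < c"
proof (rule ccontr)
  have "\<not> (\<exists>x y z w. x \<in> B \<and> z \<in> B \<and> y \<in> B' \<and> w \<in> B' \<and>
      posB n x < posB n y \<and> posB n y < posB n z \<and> posB n z < posB n w)"
    by (rule mp[OF bspec[OF bspec[OF noncrossing[unfolded noncrossing_wrt_def] B(1)] B(2)] B(3)])
  assume "\<not> d < c"
  moreover have "c \<noteq> d" using B block_unique by blast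
  ultimately have "c < d" by simp
  moreover have "a' \<le> int n" using B block_le by blast
  ultimately have "posB n a < posB n a'" "posB n a' < posB n (- c)" "posB n (- c) < posB n (- d)"
    using pos by (auto simp: posB_def)
  then show False using B(4-7) \<open>\<not> (\<exists>x y z w. _)\<close> by blast
qed

definition crossing_blocks :: "int set set" where
  "crossing_blocks = {B \<in> \<pi>. pos_part B \<noteq> {} \<and> pos_part (uminus ` B) \<noteq> {}}"

lemma crossing_blockI:
  assumes "B \<in> \<pi>" "a \<in> B" "- b \<in> B" "0 < a" "0 < b" shows "B \<in> crossing_blocks"
proof -
  have "a \<in> pos_part B" "b \<in> pos_part (uminus ` B)" using assms by simp_all
  then show ?thesis using assms(1) unfolding crossing_blocks_def by blast
qed

lemma crossing_blockE:
  assumes "B \<in> crossing_blocks"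
  obtains a b where "B \<in> \<pi>" "a \<in> B" "- b \<in> B" "0 < a" "0 < b"
proof -
  obtain a b where "B \<in> \<pi>" "a \<in> pos_part B" "b \<in> pos_part (uminus ` B)"
    using assms unfolding crossing_blocks_def by blast
  then show ?thesis using that by auto
qed

lemma X_of_eq: "X_of \<pi> = pos_part ` crossing_blocks"
proof (intro equalityI subsetI)
  fix A assume "A \<in> X_of \<pi>"
  then obtain B B' where B: "B \<in> \<pi>" "A = pos_part B" "A \<noteq> {}"
    and B': "B' \<in> \<pi>" "A \<subseteq> B'" "B' \<inter> {..<0} \<noteq> {}"
    unfolding X_of_def eta_of_def pos_part_def by auto
  have "B = B'" using B B' block_unique by (metis pos_part_iff subset_iff all_not_in_conv)
  then obtain a c where "a \<in> B" "0 < a" "c \<in> B" "c < 0" using B B' by auto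
  then have "B \<in> crossing_blocks" using crossing_blockI[of B a "- c"] B by auto
  then show "A \<in> pos_part ` crossing_blocks" using B by blast
next
  fix A assume "A \<in> pos_part ` crossing_blocks"
  then obtain B c where "B \<in> \<pi>" "A = pos_part B" "A \<noteq> {}" "- c \<in> B" "0 < c"
    unfolding crossing_blocks_def by fastforce
  then show "A \<in> X_of \<pi>" unfolding X_of_def eta_of_def pos_part_def by force
qed

lemma pos_parts_separated:
  assumes B: "B \<in> crossing_blocks" and B': "B' \<in> crossing_blocks" and "B \<noteq> B'"
  shows "below (pos_part B) (pos_part B') \<or> below (pos_part B') (pos_part B)"
proof (rule ccontr)
  obtain c where c: "B \<in> \<pi>" "- c \<in> B" "0 < c" using B by (elim crossing_blockE)
  obtain d where d: "B' \<in> \<pi>" "- d \<in> B'" "0 < d" using B' by (elim crossing_blockE)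
  have neq: "a \<noteq> a'" if "a \<in> B" "a' \<in> B'" for a a' using block_unique c d that \<open>B \<noteq> B'\<close> by blast
  assume "\<not> ?thesis"
  then obtain a a' b b' where a: "a \<in> B" "0 < a" "a' \<in> B'" "0 < a'" "a' < a"
    and b: "b \<in> B" "0 < b" "b' \<in> B'" "0 < b'" "b < b'"
    unfolding below_def using neq by (metis linorder_neq_iff pos_part_iff)
  have "c < d" using nested_crossings[OF d(1) c(1) \<open>B \<noteq> B'\<close>[symmetric] a(3) d(2) a(1) c(2)] a c d by blast
  moreover have "d < c" using nested_crossings[OF c(1) d(1) \<open>B \<noteq> B'\<close> b(1) c(2) b(3) d(2)] b c d by blast
  ultimately show False by simp
qed

lemma pos_parts_mirrored:
  assumes B: "B \<in> crossing_blocks" and B': "B' \<in> crossing_blocks"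
    and below: "below (pos_part B) (pos_part B')"
  shows "below (pos_part (uminus ` B')) (pos_part (uminus ` B))"
proof -
  obtain a where a: "B \<in> \<pi>" "a \<in> B" "0 < a" using B by (elim crossing_blockE)
  obtain a' where a': "B' \<in> \<pi>" "a' \<in> B'" "0 < a'" using B' by (elim crossing_blockE)
  have "a < a'" using below a a' unfolding below_def by simp
  have "B \<noteq> B'"
  proof
    assume "B = B'"
    with below a show False unfolding below_def by (metis less_irrefl pos_part_iff)
  qed
  show ?thesis
    unfolding below_def
    using nested_crossings[OF a(1) a'(1) \<open>B \<noteq> B'\<close> a(2) _ a'(2) _ a(3) \<open>a < a'\<close>] by auto
qed

definition mirror :: "int set \<Rightarrow> int set" where
  "mirror A = {j. 0 < j \<and> (\<exists>i\<in>A. sameblock \<pi> i (- j))}"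

lemma mirror_pos_part: "B \<in> crossing_blocks \<Longrightarrow> mirror (pos_part B) = pos_part (uminus ` B)"
  using sameblock_iff unfolding mirror_def crossing_blocks_def by fastforce

lemma neg_crossing_block: "B \<in> crossing_blocks \<Longrightarrow> uminus ` B \<in> crossing_blocks"
  unfolding crossing_blocks_def by (auto simp: neg_block image_image)

abbreviation X :: "int set set" where "X \<equiv> X_of \<pi>"

lemma X_obtain_block:
  assumes "A \<in> X" obtains B where "B \<in> crossing_blocks" "A = pos_part B"
  using assms X_of_eq by auto

lemma X_member:
  assumes "A \<in> X" shows "finite A" "A \<noteq> {}" "a \<in> A \<Longrightarrow> 0 < a \<and> a \<le> int n"
proof -
  obtain B where B: "B \<in> crossing_blocks" "A = pos_part B" using assms by (elim X_obtain_block)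
  then have "B \<in> \<pi>" "A \<subseteq> B" "A \<noteq> {}" unfolding crossing_blocks_def by auto
  then show "finite A" "A \<noteq> {}" "a \<in> A \<Longrightarrow> 0 < a \<and> a \<le> int n"
    using finite_block block_le B(2) by (auto intro: finite_subset)
qed

lemma finite_X: "finite X"
  unfolding X_of_eq crossing_blocks_def using finite_blocks by simp

lemma mirror_in_X: "A \<in> X \<Longrightarrow> mirror A \<in> X"
  by (elim X_obtain_block) (auto simp: X_of_eq mirror_pos_part intro!: imageI neg_crossing_block)

lemma mirror_mirror: "A \<in> X \<Longrightarrow> mirror (mirror A) = A"
  by (elim X_obtain_block) (simp add: mirror_pos_part neg_crossing_block image_image)

lemma X_total: "A \<in> X \<Longrightarrow> A' \<in> X \<Longrightarrow> A \<noteq> A' \<Longrightarrow> below A A' \<or> below A' A"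
  by (elim X_obtain_block) (metis pos_parts_separated)

lemma below_mirror: "A \<in> X \<Longrightarrow> A' \<in> X \<Longrightarrow> below A A' \<Longrightarrow> below (mirror A') (mirror A)"
  by (elim X_obtain_block) (simp add: mirror_pos_part pos_parts_mirrored)

lemma Max_less_iff_below: "A \<in> X \<Longrightarrow> A' \<in> X \<Longrightarrow> Max A < Max A' \<longleftrightarrow> below A A'"
  using X_member[of A] X_member[of A'] X_total[of A A'] unfolding below_def
  by (metis Max_in less_asym less_irrefl)

lemma inj_on_Max_X: "inj_on Max X"
  by (rule inj_onI) (metis Max_less_iff_below X_total less_irrefl)

abbreviation rk :: "int set \<Rightarrow> nat" where "rk \<equiv> rank Max X"

abbreviation m :: nat where "m \<equiv> card X"

lemma rank_less_iff_below: "A \<in> X \<Longrightarrow> A' \<in> X \<Longrightarrow> rk A < rk A' \<longleftrightarrow> below A A'"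
  using rank_less_iff[OF finite_X inj_on_Max_X] Max_less_iff_below by blast

lemma rank_inj: "A \<in> X \<Longrightarrow> A' \<in> X \<Longrightarrow> rk A = rk A' \<Longrightarrow> A = A'"
  using bij_betw_rank[OF finite_X inj_on_Max_X] unfolding bij_betw_def by (auto dest: inj_onD)

lemma rank_range: "rk ` X = {..<m}"
  using bij_betw_rank[OF finite_X inj_on_Max_X] unfolding bij_betw_def by blast

lemma rank_le_imp_le_Max:
  assumes "A \<in> X" "A' \<in> X" "rk A \<le> rk A'" "a \<in> A" shows "a \<le> Max A'"
proof (cases "rk A = rk A'")
  case True
  then show ?thesis using assms rank_inj X_member by (metis Max_ge)
next
  case False
  then have "rk A < rk A'" using assms(3) by simp
  then have "below A A'" using rank_less_iff_below[OF assms(1,2)] by blast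
  moreover have "Max A' \<in> A'" using X_member[OF assms(2)] by simp
  ultimately show ?thesis using assms(4) unfolding below_def by (meson less_imp_le)
qed

lemma rank_le_imp_Min_le:
  assumes "A \<in> X" "A' \<in> X" "rk A \<le> rk A'" "b \<in> A'" shows "Min A \<le> b"
proof (cases "rk A = rk A'")
  case True
  then show ?thesis using assms rank_inj X_member by (metis Min_le)
next
  case False
  then have "rk A < rk A'" using assms(3) by simp
  then have "below A A'" using rank_less_iff_below[OF assms(1,2)] by blast
  moreover have "Min A \<in> A" using X_member[OF assms(1)] by simp
  ultimately show ?thesis using assms(4) unfolding below_def by (meson less_imp_le)
qed

lemma rank_mirror: "A \<in> X \<Longrightarrow> rk (mirror A) = m - 1 - rk A"
  by (rule rank_antitone_involution[OF finite_X inj_on_Max_X mirror_in_X mirror_mirror])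
    (auto simp: Max_less_iff_below mirror_in_X below_mirror)

lemma Xenum_rank:
  assumes "A \<in> X" shows "Xenum \<pi> (Suc (rk A)) = A"
  unfolding Xenum_def rank_def[symmetric]
proof (rule the_equality)
  show "A \<in> X \<and> rk A = Suc (rk A) - 1" using assms by simp
  show "A' = A" if "A' \<in> X \<and> rk A' = Suc (rk A) - 1" for A'
    using that assms rank_inj by (metis diff_Suc_1)
qed

lemma Xenum_in_X:
  assumes "1 \<le> k" "k \<le> m" shows "Xenum \<pi> k \<in> X" "rk (Xenum \<pi> k) = k - 1"
proof -
  have "k - 1 < m" using assms by simp
  then obtain A where "A \<in> X" "rk A = k - 1" using rank_range by (metis imageE lessThan_iff)
  moreover have "Suc (k - 1) = k" using assms by simp
  ultimately show "Xenum \<pi> k \<in> X" "rk (Xenum \<pi> k) = k - 1" using Xenum_rank by metis+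
qed

lemma sameblock_mirror: "A \<in> X \<Longrightarrow> a \<in> A \<Longrightarrow> b \<in> mirror A \<Longrightarrow> sameblock \<pi> a (- b)"
  by (elim X_obtain_block) (auto simp: mirror_pos_part sameblock_def crossing_blocks_def)

lemma crossing_pair_in_X:
  assumes "0 < a" "0 < b" "sameblock \<pi> a (- b)"
  obtains A where "A \<in> X" "a \<in> A" "b \<in> mirror A"
proof -
  obtain B where B: "B \<in> \<pi>" "a \<in> B" "- b \<in> B" using assms(3) unfolding sameblock_def by blast
  then have "B \<in> crossing_blocks" using assms crossing_blockI by blast
  then show ?thesis using that[of "pos_part B"] B assms X_of_eq by (simp add: mirror_pos_part)
qed

lemma crossing_pair_iff:
  "(\<exists>i j. 0 < i \<and> i \<le> int n \<and> 0 < j \<and> j \<le> int n \<and> sameblock \<pi> i (- j)) \<longleftrightarrow> m \<noteq> 0"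
proof
  assume "\<exists>i j. 0 < i \<and> i \<le> int n \<and> 0 < j \<and> j \<le> int n \<and> sameblock \<pi> i (- j)"
  then obtain A where "A \<in> X" using crossing_pair_in_X by metis
  then show "m \<noteq> 0" using finite_X by auto
next
  assume "m \<noteq> 0"
  then obtain A where A: "A \<in> X" by fastforce
  then obtain a b where ab: "a \<in> A" "b \<in> mirror A" using X_member mirror_in_X by (metis ex_in_conv)
  then have "0 < a \<and> a \<le> int n" "0 < b \<and> b \<le> int n" using A X_member mirror_in_X by blast+
  then show "\<exists>i j. 0 < i \<and> i \<le> int n \<and> 0 < j \<and> j \<le> int n \<and> sameblock \<pi> i (- j)"
    using sameblock_mirror[OF A ab] by blast
qed

lemma mirror_fixed_iff_symmetric:
  assumes B: "B \<in> crossing_blocks" shows "mirror (pos_part B) = pos_part B \<longleftrightarrow> uminus ` B = B"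
proof
  assume fixed: "mirror (pos_part B) = pos_part B"
  obtain i where i: "B \<in> \<pi>" "i \<in> B" "0 < i" using B by (elim crossing_blockE)
  then have "- i \<in> B" using fixed B mirror_pos_part by (metis pos_part_iff neg_image_iff)
  then show "uminus ` B = B" using i symmetric_block by blast
qed (simp add: B mirror_pos_part)

lemma mirror_fixed_iff_rank:
  assumes "A \<in> X" shows "mirror A = A \<longleftrightarrow> 2 * rk A + 1 = m"
proof -
  have "rk A < m" using rank_range assms by (metis imageI lessThan_iff)
  have "mirror A = A \<longleftrightarrow> rk (mirror A) = rk A" using rank_inj[OF mirror_in_X[OF assms] assms] by metis
  also have "\<dots> \<longleftrightarrow> 2 * rk A + 1 = m" unfolding rank_mirror[OF assms] using \<open>rk A < m\<close> by arith
  finally show ?thesis .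
qed

lemma self_paired_iff_mirror_fixed: "(\<exists>i\<in>pmset n. sameblock \<pi> i (- i)) \<longleftrightarrow> (\<exists>A\<in>X. mirror A = A)"
proof
  assume "\<exists>i\<in>pmset n. sameblock \<pi> i (- i)"
  then obtain i B where B: "B \<in> \<pi>" "i \<in> B" "- i \<in> B" "i \<noteq> 0" unfolding sameblock_def pmset_def by auto
  then have "\<bar>i\<bar> \<in> B" "- \<bar>i\<bar> \<in> B" "0 < \<bar>i\<bar>" by (simp_all add: abs_if)
  then have "B \<in> crossing_blocks" "uminus ` B = B"
    using B crossing_blockI symmetric_block by blast+
  then have "pos_part B \<in> X" "mirror (pos_part B) = pos_part B"
    using mirror_fixed_iff_symmetric X_of_eq by auto
  then show "\<exists>A\<in>X. mirror A = A" by blast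
next
  assume "\<exists>A\<in>X. mirror A = A"
  then obtain B where B: "B \<in> crossing_blocks" "uminus ` B = B"
    using mirror_fixed_iff_symmetric by (metis X_obtain_block)
  then obtain i where "B \<in> \<pi>" "i \<in> B" by (elim crossing_blockE)
  moreover have "- i \<in> B" using B \<open>i \<in> B\<close> by (metis imageI)
  ultimately show "\<exists>i\<in>pmset n. sameblock \<pi> i (- i)"
    using block_subset unfolding sameblock_def by blast
qed

lemma self_paired_iff_odd: "(\<exists>i\<in>pmset n. sameblock \<pi> i (- i)) \<longleftrightarrow> odd m"
proof -
  have "(\<exists>A\<in>X. 2 * rk A + 1 = m) \<longleftrightarrow> (\<exists>k<m. 2 * k + 1 = m)"
    unfolding lessThan_iff[symmetric] rank_range[symmetric] by blast
  also have "\<dots> \<longleftrightarrow> odd m" by presburger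
  finally show ?thesis using self_paired_iff_mirror_fixed mirror_fixed_iff_rank by blast
qed

lemma mirror_fixed_eq:
  assumes "A \<in> X" "mirror A = A" shows "A = {i. 0 < i \<and> i \<le> int n \<and> sameblock \<pi> i (- i)}"
proof -
  obtain B where B: "B \<in> crossing_blocks" "A = pos_part B" using assms(1) by (elim X_obtain_block)
  then have sym: "B \<in> \<pi>" "uminus ` B = B"
    using assms mirror_fixed_iff_symmetric unfolding crossing_blocks_def by auto
  show ?thesis
  proof (intro equalityI subsetI)
    fix i assume "i \<in> A"
    then have "i \<in> B" "0 < i" using B by simp_all
    moreover from this have "- i \<in> B" using sym(2) by (metis neg_image_iff)
    ultimately show "i \<in> {i. 0 < i \<and> i \<le> int n \<and> sameblock \<pi> i (- i)}"
      using sym(1) block_le unfolding sameblock_def by blast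
  next
    fix i assume "i \<in> {i. 0 < i \<and> i \<le> int n \<and> sameblock \<pi> i (- i)}"
    then obtain B' where B': "B' \<in> \<pi>" "i \<in> B'" "- i \<in> B'" "0 < i" unfolding sameblock_def by blast
    have "B' = B" by (rule symmetric_block_unique[OF B'(1) sym(1) symmetric_block[OF B'(1-3)] sym(2)])
    then show "i \<in> A" using B B' by simp
  qed
qed

lemma Xenum_middle_odd:
  assumes "odd m" shows "Xenum \<pi> ((m + 1) div 2) = {i. 0 < i \<and> i \<le> int n \<and> sameblock \<pi> i (- i)}"
proof -
  have k: "1 \<le> (m + 1) div 2" "(m + 1) div 2 \<le> m" "2 * ((m + 1) div 2 - 1) + 1 = m"
    using assms by presburger+
  show ?thesis
    using Xenum_in_X[OF k(1,2)] mirror_fixed_iff_rank k(3) by (intro mirror_fixed_eq) auto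
qed

context
  assumes even: "even m" "m \<noteq> 0"
begin

lemma middle_index: "1 \<le> m div 2" "m div 2 + 1 \<le> m" "m - 1 - (m div 2 - 1) = m div 2"
  using even by presburger+

lemma Xenum_middle_even:
  "Xenum \<pi> (m div 2) \<in> X" "rk (Xenum \<pi> (m div 2)) = m div 2 - 1"
  "Xenum \<pi> (m div 2 + 1) \<in> X" "rk (Xenum \<pi> (m div 2 + 1)) = m div 2"
  using middle_index Xenum_in_X[of "m div 2"] Xenum_in_X[of "m div 2 + 1"] by auto

lemma mirror_Xenum_middle: "mirror (Xenum \<pi> (m div 2)) = Xenum \<pi> (m div 2 + 1)"
proof (rule rank_inj)
  show "mirror (Xenum \<pi> (m div 2)) \<in> X" "Xenum \<pi> (m div 2 + 1) \<in> X"
    using Xenum_middle_even mirror_in_X by simp_all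
  show "rk (mirror (Xenum \<pi> (m div 2))) = rk (Xenum \<pi> (m div 2 + 1))"
    using Xenum_middle_even rank_mirror middle_index(3) by simp
qed

lemma below_Xenum_middle: "below (Xenum \<pi> (m div 2)) (Xenum \<pi> (m div 2 + 1))"
  using Xenum_middle_even middle_index(1) rank_less_iff_below[OF Xenum_middle_even(1,3)] by simp

lemma crossing_pair_nested_in_middle:
  assumes "0 < a" "a < b" "sameblock \<pi> a (- b)"
  shows "a \<le> Max (Xenum \<pi> (m div 2)) \<and> Min (Xenum \<pi> (m div 2 + 1)) \<le> b"
proof -
  obtain A where A: "A \<in> X" "a \<in> A" "b \<in> mirror A"
    using assms crossing_pair_in_X by (metis less_trans)
  have "\<not> below (mirror A) A" using A assms(2) unfolding below_def by fastforce
  then have "rk A \<le> rk (mirror A)" using A mirror_in_X rank_less_iff_below by (metis not_le)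
  then have "rk A \<le> rk (Xenum \<pi> (m div 2))" "rk (Xenum \<pi> (m div 2 + 1)) \<le> rk (mirror A)"
    using A rank_mirror Xenum_middle_even even by auto
  then show ?thesis
    using A mirror_in_X Xenum_middle_even rank_le_imp_le_Max rank_le_imp_Min_le by blast
qed

lemma closest_crossing_pair_iff:
  "(0 < a \<and> a < b \<and> b \<le> int n \<and> sameblock \<pi> a (- b) \<and>
     (\<forall>a' b'. 0 < a' \<and> a' < b' \<and> b' \<le> int n \<and> sameblock \<pi> a' (- b') \<longrightarrow> b - a \<le> b' - a'))
   \<longleftrightarrow> a = Max (Xenum \<pi> (m div 2)) \<and> b = Min (Xenum \<pi> (m div 2 + 1))"
proof -
  define a0 where "a0 = Max (Xenum \<pi> (m div 2))"
  define b0 where "b0 = Min (Xenum \<pi> (m div 2 + 1))"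
  note nested = crossing_pair_nested_in_middle[folded a0_def b0_def]
  have a0: "a0 \<in> Xenum \<pi> (m div 2)" and b0: "b0 \<in> Xenum \<pi> (m div 2 + 1)"
    unfolding a0_def b0_def using Xenum_middle_even X_member by simp_all
  then have pair: "0 < a0" "a0 < b0" "b0 \<le> int n"
    using Xenum_middle_even X_member below_Xenum_middle unfolding below_def by auto
  moreover have "sameblock \<pi> a0 (- b0)"
    using sameblock_mirror[OF Xenum_middle_even(1) a0] b0 mirror_Xenum_middle by simp
  ultimately show ?thesis
    unfolding a0_def[symmetric] b0_def[symmetric]
  proof (intro iffI)
    assume closest: "0 < a \<and> a < b \<and> b \<le> int n \<and> sameblock \<pi> a (- b) \<and>
      (\<forall>a' b'. 0 < a' \<and> a' < b' \<and> b' \<le> int n \<and> sameblock \<pi> a' (- b') \<longrightarrow> b - a \<le> b' - a')"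
    then have "a \<le> a0" "b0 \<le> b" "b - a \<le> b0 - a0" using nested pair \<open>sameblock \<pi> a0 (- b0)\<close> by blast+
    then show "a = a0 \<and> b = b0" by linarith
  qed (use nested in fastforce)
qed

lemma psi_middle_edge:
  assumes "psi \<pi> = (\<sigma>, x)"
  shows "is_edge \<sigma> (Max (Xenum \<pi> (m div 2))) (Min (Xenum \<pi> (m div 2 + 1)))"
proof -
  have "Xenum \<pi> (m div 2) \<union> Xenum \<pi> (m + 1 - m div 2) \<in> \<sigma>"
    using psi_merged_block[OF assms] middle_index by simp
  moreover have "m + 1 - m div 2 = m div 2 + 1" using even by auto
  ultimately show ?thesis
    using Xenum_middle_even X_member below_Xenum_middle by (intro is_edge_Max_Min) auto
qed

end

end

theorem lemma3p2:
  fixes n :: nat and \<pi> :: "int set set" and \<sigma> :: "int set set" and x :: xval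
  assumes "n \<ge> 1" and "\<pi> \<in> NC_B n" and "psi \<pi> = (\<sigma>, x)"
  shows "(x = XEmpty \<longleftrightarrow>
           \<not> (\<exists>i\<in>pmset n. sameblock \<pi> i (- i)) \<and>
           \<not> (\<exists>i j. 0 < i \<and> i \<le> int n \<and> 0 < j \<and> j \<le> int n \<and> sameblock \<pi> i (- j)))
       \<and> ((\<exists>a b. x = XEdge a b) \<longleftrightarrow>
           \<not> (\<exists>i\<in>pmset n. sameblock \<pi> i (- i)) \<and>
           (\<exists>i j. 0 < i \<and> i \<le> int n \<and> 0 < j \<and> j \<le> int n \<and> sameblock \<pi> i (- j)))
       \<and> ((\<exists>a b. x = XEdge a b) \<longrightarrow>
           (let minpair = (\<lambda>(a, b). 0 < a \<and> a < b \<and> b \<le> int n \<and> sameblock \<pi> a (- b) \<and>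
                   (\<forall>a' b'. 0 < a' \<and> a' < b' \<and> b' \<le> int n \<and> sameblock \<pi> a' (- b')
                       \<longrightarrow> b - a \<le> b' - a'))
            in (\<exists>!p. minpair p) \<and>
               (\<forall>a b. minpair (a, b) \<longrightarrow> is_edge \<sigma> a b \<and> x = XEdge a b)))
       \<and> ((\<exists>B. x = XBlock B) \<longleftrightarrow> (\<exists>i\<in>pmset n. sameblock \<pi> i (- i)))
       \<and> ((\<exists>B. x = XBlock B) \<longrightarrow>
           x = XBlock {i. 0 < i \<and> i \<le> int n \<and> sameblock \<pi> i (- i)})"
proof -
  interpret nc_B_partition n \<pi> using assms(2) by unfold_locales
  have x: "x = (if m = 0 then XEmpty
      else if even m then XEdge (Max (Xenum \<pi> (m div 2))) (Min (Xenum \<pi> (m div 2 + 1)))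
      else XBlock (Xenum \<pi> ((m + 1) div 2)))"
    using assms(3) by (simp add: psi_def Let_def)
  show ?thesis
    unfolding crossing_pair_iff self_paired_iff_odd Let_def
    using x Xenum_middle_odd psi_middle_edge[OF _ _ assms(3)] closest_crossing_pair_iff
    by (auto split: if_splits)
qed

end
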